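(* Let $\tilde K_h$ be any $q\times p$ matrix with entries in $\overline{\mathbb{R}}$. For $t\in\bar\tau_\delta=\{0,\delta,\dots,T\}$ let $v^t$ be the value function at time $t$ and $v_h^t$ its approximation given by the effective max-plus finite element method in which $K_h$ is approximated by $\tilde K_h$. Then \[ \|v_h^T-v^T\|_\infty\leq\Big(1+\frac T\delta\Big)\Big(\sup_{t\in\bar\tau_\delta}\big(\|P^{-\mathcal Z_h}(v^t)-v^t\|_\infty+\|P_{\mathcal W_h}(v^t)-v^t\|_\infty\big)+\|\tilde K_h-K_h\|_\infty\Big). \]
   Context: Optimal control setting: $X\subseteq\mathbb{R}^n$, $U\subseteq\mathbb{R}^m$, $\ell:X\times U\to\mathbb R$, $f:X\times U\to\mathbb{R}^n$, $T>0$, $\phi:X\to\mathbb{R}\cup\{-\infty\}$. For $t\ge0$ and $g:X\to\overline{\mathbb R}$, $S^tg(x)=\sup\{\int_0^t\ell(\mathbf x(s),\mathbf u(s))ds+g(\mathbf x(t))\}$ over measurable $\mathbf u:[0,t]\to U$ and absolutely continuous $\mathbf x:[0,t]\to X$ with $\dot{\mathbf x}=f(\mathbf x,\mathbf u)$ a.e. and $\mathbf x(0)=x$; value function $v^t=S^t\phi$. Arithmetic in $\overline{\mathbb R}=\mathbb{R}\cup\{\pm\infty\}$ with $-\infty$ absorbing for $+$; $a\backslash b=\max\{\lambda\in\overline{\mathbb{R}}:a+\lambda\leq b\}$. $\langle u,v\rangle=\sup_{x\in X}(u(x)+v(x))$. Finite elements $w_1,\dots,w_p$ and test functions $z_1,\dots,z_q$,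 functions $X\to\mathbb{R}\cup\{-\infty\}$. $W_h\lambda=\sup_i(w_i+\lambda_i)$; $(W_h\backslash g)_i=\inf_{x\in X}(w_i(x)\backslash g(x))$; $P_{\mathcal W_h}g=W_h(W_h\backslash g)$; $P^{-\mathcal Z_h}g(x)=\min_j\big(z_j(x)\backslash\langle z_j,g\rangle\big)$. For a matrix $A$: $(A\lambda)_j=\max_k(A_{jk}+\lambda_k)$, $(A\backslash\mu)_i=\min_jA_{ji}\backslash\mu_j$. Let $N\geq1$, $\delta=T/N$, $(M_h)_{ji}=\langle z_j,w_i\rangle$, $(K_h)_{ji}=\langle z_j,S^\delta w_i\rangle$. Effective method with $\tilde K_h$: $\lambda^0=W_h\backslash\phi$, $\lambda^{t+\delta}=M_h\backslash(\tilde K_h\lambda^t)$ for $t=0,\dots,T-\delta$, $v_h^t=W_h\lambda^t$. For $u,v:X\to\overline{\mathbb R}$, $\|u-v\|_\infty=\inf\{\lambda\geq0: v-\lambda\leq u\leq v+\lambda\}$ (equal to $\sup_x|u(x)-v(x)|$ when $u-v$ is finite-valued); for matrices, $\|A-B\|_\infty$ is defined in the same way entrywise (i.e. $\max_{j,i}|A_{ji}-B_{ji}|$ for finite entries). *)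

theory Defs
  imports "HOL-Analysis.Analysis" "HOL-Library.Extended_Real"
begin

text \<open>Addition in the extended reals with -infinity absorbing (so -inf + inf = -inf).\<close>
definition madd :: "ereal \<Rightarrow> ereal \<Rightarrow> ereal" where
  "madd a b = (if a = -\<infinity> \<or> b = -\<infinity> then -\<infinity> else a + b)"

definition resid :: "ereal \<Rightarrow> ereal \<Rightarrow> ereal" where
  "resid a b = (GREATEST lam. madd a lam \<le> b)"

definition pairing :: "'a set \<Rightarrow> ('a \<Rightarrow> ereal) \<Rightarrow> ('a \<Rightarrow> ereal) \<Rightarrow> ereal" where
  "pairing X u v = (SUP x\<in>X. madd (u x) (v x))"

definition supdist :: "'a set \<Rightarrow> ('a \<Rightarrow> ereal) \<Rightarrow> ('a \<Rightarrow> ereal) \<Rightarrow> ereal" where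
  "supdist X u v = Inf {lam::ereal. 0 \<le> lam \<and>
      (\<forall>x\<in>X. madd (v x) (-lam) \<le> u x \<and> u x \<le> madd (v x) lam)}"

definition matdist :: "nat \<Rightarrow> nat \<Rightarrow> (nat \<Rightarrow> nat \<Rightarrow> ereal) \<Rightarrow> (nat \<Rightarrow> nat \<Rightarrow> ereal) \<Rightarrow> ereal" where
  "matdist q p A B = Inf {lam::ereal. 0 \<le> lam \<and>
      (\<forall>j<q. \<forall>i<p. madd (B j i) (-lam) \<le> A j i \<and> A j i \<le> madd (B j i) lam)}"

definition mp_mult :: "nat \<Rightarrow> (nat \<Rightarrow> nat \<Rightarrow> ereal) \<Rightarrow> (nat \<Rightarrow> ereal) \<Rightarrow> nat \<Rightarrow> ereal" where
  "mp_mult p A lam j = (SUP k\<in>{..<p}. madd (A j k) (lam k))"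

definition mp_resid :: "nat \<Rightarrow> (nat \<Rightarrow> nat \<Rightarrow> ereal) \<Rightarrow> (nat \<Rightarrow> ereal) \<Rightarrow> nat \<Rightarrow> ereal" where
  "mp_resid q A \<mu> i = (INF j\<in>{..<q}. resid (A j i) (\<mu> j))"

definition Wop :: "nat \<Rightarrow> (nat \<Rightarrow> 'a \<Rightarrow> ereal) \<Rightarrow> (nat \<Rightarrow> ereal) \<Rightarrow> 'a \<Rightarrow> ereal" where
  "Wop p w lam x = (SUP i\<in>{..<p}. madd (w i x) (lam i))"

definition Wres :: "'a set \<Rightarrow> (nat \<Rightarrow> 'a \<Rightarrow> ereal) \<Rightarrow> ('a \<Rightarrow> ereal) \<Rightarrow> nat \<Rightarrow> ereal" where
  "Wres X w g i = (INF x\<in>X. resid (w i x) (g x))"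

definition PW :: "'a set \<Rightarrow> nat \<Rightarrow> (nat \<Rightarrow> 'a \<Rightarrow> ereal) \<Rightarrow> ('a \<Rightarrow> ereal) \<Rightarrow> 'a \<Rightarrow> ereal" where
  "PW X p w g = Wop p w (Wres X w g)"

definition PZ :: "'a set \<Rightarrow> nat \<Rightarrow> (nat \<Rightarrow> 'a \<Rightarrow> ereal) \<Rightarrow> ('a \<Rightarrow> ereal) \<Rightarrow> 'a \<Rightarrow> ereal" where
  "PZ X q z g x = (INF j\<in>{..<q}. resid (z j x) (pairing X (z j) g))"

definition abs_cont_on :: "real \<Rightarrow> real \<Rightarrow> (real \<Rightarrow> 'b::real_normed_vector) \<Rightarrow> bool" where
  "abs_cont_on a b g \<longleftrightarrow>
     (\<forall>e>0. \<exists>d>0. \<forall>(n::nat) (c::nat \<Rightarrow> real) (c'::nat \<Rightarrow> real).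
        (\<forall>k<n. a \<le> c k \<and> c k \<le> c' k \<and> c' k \<le> b) \<and>
        (\<forall>k<n. \<forall>l<n. k \<noteq> l \<longrightarrow> c' k \<le> c l \<or> c' l \<le> c k) \<and>
        (\<Sum>k<n. c' k - c k) < d
        \<longrightarrow> (\<Sum>k<n. norm (g (c' k) - g (c k))) < e)"

text \<open>Admissible pairs (control, trajectory) on [0,t] starting at x0: u measurable with values
  in U, traj absolutely continuous with values in X, traj' = f(traj,u) a.e., traj 0 = x0,
  and the running payoff integrable on [0,t] (so that the integral makes sense).\<close>
definition admissible ::
  "('x::euclidean_space) set \<Rightarrow> ('u::euclidean_space) set \<Rightarrow> ('x \<Rightarrow> 'u \<Rightarrow> 'x) \<Rightarrow> ('x \<Rightarrow> 'u \<Rightarrow> real)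
    \<Rightarrow> real \<Rightarrow> 'x \<Rightarrow> (real \<Rightarrow> 'u) \<Rightarrow> (real \<Rightarrow> 'x) \<Rightarrow> bool" where
  "admissible X U f L t x0 u traj \<longleftrightarrow>
     u \<in> borel_measurable (lebesgue_on {0..t}) \<and>
     (\<forall>s\<in>{0..t}. u s \<in> U) \<and>
     (\<forall>s\<in>{0..t}. traj s \<in> X) \<and>
     abs_cont_on 0 t traj \<and>
     (AE s in lebesgue_on {0..t}. (traj has_vector_derivative f (traj s) (u s)) (at s within {0..t})) \<and>
     traj 0 = x0 \<and>
     integrable (lebesgue_on {0..t}) (\<lambda>s. L (traj s) (u s))"

definition Sgrp ::
  "('x::euclidean_space) set \<Rightarrow> ('u::euclidean_space) set \<Rightarrow> ('x \<Rightarrow> 'u \<Rightarrow> 'x) \<Rightarrow> ('x \<Rightarrow> 'u \<Rightarrow> real)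
    \<Rightarrow> real \<Rightarrow> ('x \<Rightarrow> ereal) \<Rightarrow> 'x \<Rightarrow> ereal" where
  "Sgrp X U f L t g x0 =
     (SUP (u, traj)\<in>{(u, traj). admissible X U f L t x0 u traj}.
        madd (ereal (integral\<^sup>L (lebesgue_on {0..t}) (\<lambda>s. L (traj s) (u s)))) (g (traj t)))"

primrec fem_coeffs ::
  "'a set \<Rightarrow> nat \<Rightarrow> nat \<Rightarrow> (nat \<Rightarrow> 'a \<Rightarrow> ereal) \<Rightarrow> (nat \<Rightarrow> 'a \<Rightarrow> ereal) \<Rightarrow> (nat \<Rightarrow> nat \<Rightarrow> ereal)
    \<Rightarrow> ('a \<Rightarrow> ereal) \<Rightarrow> nat \<Rightarrow> nat \<Rightarrow> ereal" where
  "fem_coeffs X p q w z Kt \<phi> 0 = Wres X w \<phi>"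
| "fem_coeffs X p q w z Kt \<phi> (Suc k) =
     mp_resid q (\<lambda>j i. pairing X (z j) (w i)) (mp_mult p Kt (fem_coeffs X p q w z Kt \<phi> k))"

end

theory Submission
  imports Defs
begin

text \<open>
  The value functions satisfy the dynamic programming principle \<open>v\<^sup>t\<^sup>+\<^sup>\<delta> = S\<^sup>\<delta> v\<^sup>t\<close>,
  obtained by gluing and splitting admissible trajectories. Since \<open>S\<^sup>\<delta>\<close> is max-plus linear
  and residuation turns suprema into infima, one step of the scheme with the exact matrix is
  \<open>W\<^sub>h (M\<^sub>h \ K\<^sub>h \<lambda>) = P\<^sub>W P\<^sup>-\<^sup>Z S\<^sup>\<delta> (W\<^sub>h \<lambda>)\<close>. All operators involved are monotone and
  commute with adding real constants, hence are nonexpansive for the sup-norm. Comparing the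
  two recursions, every time step adds at most the matrix error and the projection error at
  the new time, and the projection error at time 0 enters once more: after \<open>N = T/\<delta>\<close> steps
  this gives \<open>N\<close> matrix errors and \<open>N + 1\<close> projection errors.
\<close>

section \<open>Max-plus arithmetic\<close>

lemma eq_by_lower_bounds: "(\<And>l::'a::order. l \<le> x \<longleftrightarrow> l \<le> y) \<Longrightarrow> x = y"
  by (metis order.antisym order.refl)

lemma eq_by_upper_bounds: "(\<And>l::'a::order. x \<le> l \<longleftrightarrow> y \<le> l) \<Longrightarrow> x = y"
  by (metis order.antisym order.refl)

lemma ereal_le_add_real_iff: "(l::ereal) \<le> x + ereal c \<longleftrightarrow> l + ereal (-c) \<le> x"
  by (cases l; cases x) (auto simp: algebra_simps)

lemma ereal_add_real_le_iff: "(x::ereal) + ereal c \<le> l \<longleftrightarrow> x \<le> l + ereal (-c)"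
  by (cases l; cases x) (auto simp: algebra_simps)

lemma ereal_add_real_assoc: "(x::ereal) + ereal a + ereal b = x + ereal (a + b)"
  by (cases x) auto

lemma INF_add_real: "(INF i\<in>I. f i + ereal c) = (INF i\<in>I. f i) + ereal c"
  by (rule eq_by_lower_bounds) (simp add: ereal_le_add_real_iff le_INF_iff)

lemma SUP_add_real: "(SUP i\<in>I. f i + ereal c) = (SUP i\<in>I. f i) + ereal c"
  by (rule eq_by_upper_bounds) (simp add: ereal_add_real_le_iff SUP_le_iff)

lemma madd_ereal_right: "madd a (ereal c) = a + ereal c"
  by (cases a) (auto simp: madd_def)

lemma madd_commute: "madd a b = madd b a"
  by (auto simp: madd_def add.commute)

lemma madd_assoc: "madd a (madd b c) = madd (madd a b) c"
  by (cases a; cases b; cases c) (auto simp: madd_def)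

lemma madd_ereal_ereal: "madd (ereal a) (madd (ereal b) c) = madd (ereal (a + b)) c"
  by (cases c) (auto simp: madd_def)

lemma madd_zero_left: "madd (ereal 0) a = a"
  by (cases a) (auto simp: madd_def)

lemma madd_mono: "b \<le> c \<Longrightarrow> madd a b \<le> madd a c"
  by (cases a; cases b; cases c) (auto simp: madd_def)

lemma madd_mono_left: "a \<le> b \<Longrightarrow> madd a c \<le> madd b c"
  using madd_mono madd_commute by metis

lemma madd_add_real: "madd a (b + ereal c) = madd a b + ereal c"
  by (cases a; cases b) (auto simp: madd_def)

lemma madd_add_real_left: "madd (b + ereal c) a = madd b a + ereal c"
  using madd_add_real madd_commute by metis

lemma madd_Sup: "madd a (Sup S) = (SUP l\<in>S. madd a l)"
proof (cases a)
  case (real r)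
  then have "madd a l = ereal r + l" for l
    by (cases l) (auto simp: madd_def)
  then show ?thesis
    using SUP_ereal_add_right[of S "ereal r" "\<lambda>x. x"]
    by (cases "S = {}") (simp_all add: bot_ereal_def)
next
  case PInf
  show ?thesis
  proof (cases "Sup S = -\<infinity>")
    case True
    then have "S \<subseteq> {-\<infinity>}"
      using Sup_eq_MInfty[of S] by auto
    then have "(SUP l\<in>S. madd a l) \<le> -\<infinity>"
      by (intro SUP_least) (auto simp: madd_def)
    then show ?thesis
      using True by (simp add: madd_def)
  next
    case False
    then obtain l where "l \<in> S" "l \<noteq> -\<infinity>"
      by (auto simp: Sup_eq_MInfty)
    then have "(SUP l\<in>S. madd a l) = \<infinity>"
      using PInf by (metis SUP_upper madd_def top_ereal_def top_le plus_ereal.simps(2,5))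
    then show ?thesis
      using False PInf by (simp add: madd_def)
  qed
next
  case MInf
  then have "(SUP l\<in>S. madd a l) \<le> -\<infinity>"
    by (intro SUP_least) (auto simp: madd_def)
  then show ?thesis
    using MInf by (simp add: madd_def)
qed

lemma madd_SUP: "madd a (SUP i\<in>I. f i) = (SUP i\<in>I. madd a (f i))"
  using madd_Sup[of a "f ` I"] by (simp add: image_comp)

lemma madd_SUP_left: "madd (SUP i\<in>I. f i) a = (SUP i\<in>I. madd (f i) a)"
  using madd_SUP[of a f I] by (simp add: madd_commute)

lemma madd_le_iff_le_resid: "madd a l \<le> b \<longleftrightarrow> l \<le> resid a b"
proof -
  define S where "S = {l. madd a l \<le> b}"
  have Sup_in: "madd a (Sup S) \<le> b"
    unfolding madd_Sup S_def by (auto intro: SUP_least)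
  then have resid: "resid a b = Sup S"
    unfolding resid_def by (intro Greatest_equality) (auto simp: S_def intro: Sup_upper)
  show ?thesis
  proof
    assume "madd a l \<le> b"
    then show "l \<le> resid a b"
      unfolding resid S_def by (auto intro: Sup_upper)
  next
    assume "l \<le> resid a b"
    then show "madd a l \<le> b"
      unfolding resid using Sup_in madd_mono order.trans by blast
  qed
qed

lemma resid_mono: "b \<le> c \<Longrightarrow> resid a b \<le> resid a c"
  by (metis madd_le_iff_le_resid order.refl order.trans)

lemma resid_INF: "resid a (INF i\<in>I. f i) = (INF i\<in>I. resid a (f i))"
  by (rule eq_by_lower_bounds) (simp add: madd_le_iff_le_resid[symmetric] le_INF_iff)

lemma resid_SUP_left: "resid (SUP i\<in>I. f i) b = (INF i\<in>I. resid (f i) b)"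
  by (rule eq_by_lower_bounds)
    (simp add: madd_le_iff_le_resid[symmetric] le_INF_iff madd_SUP_left SUP_le_iff)

lemma resid_resid: "resid a (resid b c) = resid (madd b a) c"
  by (rule eq_by_lower_bounds) (simp add: madd_le_iff_le_resid[symmetric] madd_assoc)

lemma resid_add_real: "resid a (b + ereal c) = resid a b + ereal c"
proof (rule eq_by_lower_bounds)
  fix l
  have "l \<le> resid a (b + ereal c) \<longleftrightarrow> madd a (l + ereal (-c)) \<le> b"
    by (simp add: madd_le_iff_le_resid[symmetric] ereal_le_add_real_iff madd_add_real)
  also have "\<dots> \<longleftrightarrow> l \<le> resid a b + ereal c"
    by (simp add: madd_le_iff_le_resid ereal_le_add_real_iff)
  finally show "l \<le> resid a (b + ereal c) \<longleftrightarrow> l \<le> resid a b + ereal c" .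
qed

definition uniformly_close :: "'a set \<Rightarrow> real \<Rightarrow> ('a \<Rightarrow> ereal) \<Rightarrow> ('a \<Rightarrow> ereal) \<Rightarrow> bool" where
  "uniformly_close X e u v \<longleftrightarrow> (\<forall>x\<in>X. u x \<le> v x + ereal e \<and> v x \<le> u x + ereal e)"

lemma uniformly_close_trans:
  assumes "uniformly_close X e1 u v" "uniformly_close X e2 v w"
  shows "uniformly_close X (e1 + e2) u w"
  unfolding uniformly_close_def
proof (intro ballI conjI)
  fix x assume "x \<in> X"
  with assms have uv: "u x \<le> v x + ereal e1" "v x \<le> u x + ereal e1"
    and vw: "v x \<le> w x + ereal e2" "w x \<le> v x + ereal e2"
    by (auto simp: uniformly_close_def)
  have "u x \<le> w x + ereal e2 + ereal e1"
    using uv(1) vw(1) by (meson add_right_mono order.trans)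
  then show "u x \<le> w x + ereal (e1 + e2)"
    by (simp only: ereal_add_real_assoc add.commute[of e2 e1])
  have "w x \<le> u x + ereal e1 + ereal e2"
    using uv(2) vw(2) by (meson add_right_mono order.trans)
  then show "w x \<le> u x + ereal (e1 + e2)"
    by (simp add: ereal_add_real_assoc)
qed

lemma uniformly_close_mono: "uniformly_close X e u v \<Longrightarrow> e \<le> e' \<Longrightarrow> uniformly_close X e' u v"
  unfolding uniformly_close_def by (meson add_left_mono ereal_less_eq(3) order.trans)

lemma uniformly_close_limit:
  assumes "\<And>r. e < r \<Longrightarrow> uniformly_close X r u v"
  shows "uniformly_close X e u v"
  unfolding uniformly_close_def
proof (intro ballI conjI)
  fix x assume "x \<in> X"
  then have "u x \<le> v x + ereal e + ereal \<epsilon> \<and> v x \<le> u x + ereal e + ereal \<epsilon>" if "0 < \<epsilon>" for \<epsilon>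
    using assms[of "e + \<epsilon>"] that by (auto simp: uniformly_close_def ereal_add_real_assoc)
  then show "u x \<le> v x + ereal e" "v x \<le> u x + ereal e"
    by (auto intro: ereal_le_epsilon2)
qed

lemma supdist_nonneg: "0 \<le> supdist X u v"
  unfolding supdist_def by (rule Inf_greatest) auto

lemma supdist_le_ereal_iff:
  assumes "0 \<le> e"
  shows "supdist X u v \<le> ereal e \<longleftrightarrow> uniformly_close X e u v"
proof
  assume "uniformly_close X e u v"
  then show "supdist X u v \<le> ereal e"
    unfolding supdist_def using assms
    by (intro Inf_lower) (auto simp: uniformly_close_def madd_ereal_right ereal_add_real_le_iff)
next
  assume le: "supdist X u v \<le> ereal e"
  have "uniformly_close X r u v" if "e < r" for r
  proof -
    have "supdist X u v < ereal r"
      using le that by (simp add: le_less_trans)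
    then obtain lam where "0 \<le> lam" "lam < ereal r"
      and lam: "\<forall>x\<in>X. madd (v x) (-lam) \<le> u x \<and> u x \<le> madd (v x) lam"
      unfolding supdist_def by (auto simp: Inf_less_iff)
    then obtain l where "lam = ereal l" "l \<le> r"
      by (cases lam) auto
    with lam have "uniformly_close X l u v"
      by (auto simp: uniformly_close_def madd_ereal_right ereal_add_real_le_iff)
    then show ?thesis
      using \<open>l \<le> r\<close> by (rule uniformly_close_mono)
  qed
  then show "uniformly_close X e u v"
    by (rule uniformly_close_limit)
qed

lemma matdist_eq_supdist:
  "matdist q p A B = supdist {(j, i). j < q \<and> i < p} (case_prod A) (case_prod B)"
  unfolding matdist_def supdist_def by (rule arg_cong[where f = Inf]) auto

lemma matdist_nonneg: "0 \<le> matdist q p A B"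
  unfolding matdist_eq_supdist by (rule supdist_nonneg)

lemma matdist_le_ereal_iff:
  assumes "0 \<le> e"
  shows "matdist q p A B \<le> ereal e \<longleftrightarrow>
           (\<forall>j<q. \<forall>i<p. A j i \<le> B j i + ereal e \<and> B j i \<le> A j i + ereal e)"
  unfolding matdist_eq_supdist supdist_le_ereal_iff[OF assms] uniformly_close_def by auto

lemma nonexpansive_mono_shift:
  assumes mono: "\<And>g g'. \<forall>y\<in>Y. g y \<le> g' y \<Longrightarrow> \<forall>x\<in>X. F g x \<le> F g' x"
    and shift: "\<And>g c x. x \<in> X \<Longrightarrow> F (\<lambda>y. g y + ereal c) x = F g x + ereal c"
    and close: "uniformly_close Y e g g'"
  shows "uniformly_close X e (F g) (F g')"
  unfolding uniformly_close_def
proof (intro ballI conjI)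
  fix x assume "x \<in> X"
  have "\<forall>y\<in>Y. g y \<le> g' y + ereal e" "\<forall>y\<in>Y. g' y \<le> g y + ereal e"
    using close by (auto simp: uniformly_close_def)
  then show "F g x \<le> F g' x + ereal e" "F g' x \<le> F g x + ereal e"
    using mono \<open>x \<in> X\<close> shift[OF \<open>x \<in> X\<close>] by metis+
qed

lemma Wop_mono: "\<forall>i\<in>{..<p}. l i \<le> l' i \<Longrightarrow> Wop p w l x \<le> Wop p w l' x"
  unfolding Wop_def by (intro SUP_mono) (auto intro: madd_mono)

lemma Wop_add_real: "Wop p w (\<lambda>i. l i + ereal c) x = Wop p w l x + ereal c"
  unfolding Wop_def by (simp add: madd_add_real SUP_add_real)

lemma Wop_nonexpansive:
  "uniformly_close {..<p} e l l' \<Longrightarrow> uniformly_close X e (Wop p w l) (Wop p w l')"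
  by (rule nonexpansive_mono_shift[where Y = "{..<p}"]) (auto intro: Wop_mono simp: Wop_add_real)

lemma Wres_mono: "\<forall>x\<in>X. g x \<le> g' x \<Longrightarrow> Wres X w g i \<le> Wres X w g' i"
  unfolding Wres_def by (intro INF_mono) (auto intro: resid_mono)

lemma Wres_add_real: "Wres X w (\<lambda>y. g y + ereal c) i = Wres X w g i + ereal c"
  unfolding Wres_def by (simp add: resid_add_real INF_add_real)

lemma Wres_nonexpansive:
  "uniformly_close X e g g' \<Longrightarrow> uniformly_close I e (Wres X w g) (Wres X w g')"
  by (rule nonexpansive_mono_shift[where Y = X]) (auto intro: Wres_mono simp: Wres_add_real)

lemma PW_nonexpansive:
  "uniformly_close X e g g' \<Longrightarrow> uniformly_close Y e (PW X p w g) (PW X p w g')"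
  unfolding PW_def by (intro Wop_nonexpansive Wres_nonexpansive)

lemma pairing_mono: "\<forall>x\<in>X. g x \<le> g' x \<Longrightarrow> pairing X z g \<le> pairing X z g'"
  unfolding pairing_def by (intro SUP_mono) (auto intro: madd_mono)

lemma pairing_add_real: "pairing X z (\<lambda>y. g y + ereal c) = pairing X z g + ereal c"
  unfolding pairing_def by (simp add: madd_add_real SUP_add_real)

lemma PZ_mono: "\<forall>x\<in>X. g x \<le> g' x \<Longrightarrow> PZ X q z g y \<le> PZ X q z g' y"
  unfolding PZ_def by (intro INF_mono) (auto intro!: resid_mono pairing_mono)

lemma PZ_add_real: "PZ X q z (\<lambda>y. g y + ereal c) x = PZ X q z g x + ereal c"
  unfolding PZ_def by (simp add: pairing_add_real resid_add_real INF_add_real)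

lemma PZ_nonexpansive:
  "uniformly_close X e g g' \<Longrightarrow> uniformly_close Y e (PZ X q z g) (PZ X q z g')"
  by (rule nonexpansive_mono_shift[where Y = X]) (auto intro: PZ_mono simp: PZ_add_real)

lemma mp_resid_mono: "\<forall>j\<in>{..<q}. l j \<le> l' j \<Longrightarrow> mp_resid q M l i \<le> mp_resid q M l' i"
  unfolding mp_resid_def by (intro INF_mono) (auto intro!: resid_mono)

lemma mp_resid_add_real: "mp_resid q M (\<lambda>j. l j + ereal c) i = mp_resid q M l i + ereal c"
  unfolding mp_resid_def by (simp add: resid_add_real INF_add_real)

lemma mp_resid_nonexpansive:
  "uniformly_close {..<q} e l l' \<Longrightarrow> uniformly_close I e (mp_resid q M l) (mp_resid q M l')"
  by (rule nonexpansive_mono_shift[where Y = "{..<q}"])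
    (auto intro: mp_resid_mono simp: mp_resid_add_real)

lemma mp_mult_uniformly_close:
  assumes "\<And>j i. j < q \<Longrightarrow> i < p \<Longrightarrow> A j i \<le> B j i + ereal e \<and> B j i \<le> A j i + ereal e"
  shows "uniformly_close {..<q} e (mp_mult p A l) (mp_mult p B l)"
proof -
  have le: "mp_mult p A' l j \<le> mp_mult p B' l j + ereal e"
    if "\<And>i. i < p \<Longrightarrow> A' j i \<le> B' j i + ereal e" for A' B' j
  proof -
    have "mp_mult p A' l j \<le> (SUP i\<in>{..<p}. madd (B' j i + ereal e) (l i))"
      unfolding mp_mult_def using that by (intro SUP_mono) (auto intro!: bexI madd_mono_left)
    also have "\<dots> = mp_mult p B' l j + ereal e"
      unfolding mp_mult_def by (simp add: madd_add_real_left SUP_add_real)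
    finally show ?thesis .
  qed
  show ?thesis
    unfolding uniformly_close_def using assms by (auto intro!: le)
qed

lemma Wres_PZ:
  "Wres X w (PZ X q z h) = mp_resid q (\<lambda>j i. pairing X (z j) (w i)) (\<lambda>j. pairing X (z j) h)"
proof
  fix i
  have "Wres X w (PZ X q z h) i =
      (INF x\<in>X. INF j\<in>{..<q}. resid (madd (z j x) (w i x)) (pairing X (z j) h))"
    unfolding Wres_def PZ_def by (simp add: resid_INF resid_resid)
  also have "\<dots> = (INF j\<in>{..<q}. INF x\<in>X. resid (madd (z j x) (w i x)) (pairing X (z j) h))"
    by (rule INF_commute)
  also have "\<dots> = mp_resid q (\<lambda>j i. pairing X (z j) (w i)) (\<lambda>j. pairing X (z j) h) i"
    unfolding mp_resid_def pairing_def resid_SUP_left by simp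
  finally show "Wres X w (PZ X q z h) i =
      mp_resid q (\<lambda>j i. pairing X (z j) (w i)) (\<lambda>j. pairing X (z j) h) i" .
qed

section \<open>Absolute continuity\<close>

definition nonoverlapping_intervals ::
  "real \<Rightarrow> real \<Rightarrow> nat \<Rightarrow> (nat \<Rightarrow> real) \<Rightarrow> (nat \<Rightarrow> real) \<Rightarrow> bool" where
  "nonoverlapping_intervals a b n c c' \<longleftrightarrow>
     (\<forall>k<n. a \<le> c k \<and> c k \<le> c' k \<and> c' k \<le> b) \<and>
     (\<forall>k<n. \<forall>l<n. k \<noteq> l \<longrightarrow> c' k \<le> c l \<or> c' l \<le> c k)"

lemma abs_cont_on_iff:
  "abs_cont_on a b g \<longleftrightarrow>
     (\<forall>e>0. \<exists>d>0. \<forall>n c c'. nonoverlapping_intervals a b n c c' \<and> (\<Sum>k<n. c' k - c k) < d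
        \<longrightarrow> (\<Sum>k<n. norm (g (c' k) - g (c k))) < e)"
  by (simp add: abs_cont_on_def nonoverlapping_intervals_def conj_assoc)

lemma abs_cont_on_const: "abs_cont_on a b (\<lambda>s. x)"
  unfolding abs_cont_on_def by (auto intro: exI[of _ 1])

lemma nonoverlapping_intervals_image:
  assumes "nonoverlapping_intervals a b n c c'" "mono h"
    and "\<And>s. a \<le> s \<Longrightarrow> s \<le> b \<Longrightarrow> a' \<le> h s \<and> h s \<le> b'"
  shows "nonoverlapping_intervals a' b' n (h \<circ> c) (h \<circ> c')"
proof -
  have "a' \<le> h (c k) \<and> h (c k) \<le> h (c' k) \<and> h (c' k) \<le> b'" if "k < n" for k
    using assms that unfolding nonoverlapping_intervals_def mono_def by (meson order.trans)
  moreover have "h (c' k) \<le> h (c l) \<or> h (c' l) \<le> h (c k)" if "k < n" "l < n" "k \<noteq> l" for k l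
    using assms(1,2) that unfolding nonoverlapping_intervals_def mono_def by blast
  ultimately show ?thesis
    by (auto simp: nonoverlapping_intervals_def)
qed

lemma variation_lt_mono_image:
  assumes small: "\<forall>n c c'. nonoverlapping_intervals a b n c c' \<and> (\<Sum>k<n. c' k - c k) < d
                     \<longrightarrow> (\<Sum>k<n. norm (g (c' k) - g (c k))) < e"
    and family: "nonoverlapping_intervals a' b' n c c'" and len: "(\<Sum>k<n. c' k - c k) < d"
    and "mono h" and into: "\<And>s. a' \<le> s \<Longrightarrow> s \<le> b' \<Longrightarrow> a \<le> h s \<and> h s \<le> b"
    and contract: "\<And>s s'. s \<le> s' \<Longrightarrow> h s' - h s \<le> s' - s"
  shows "(\<Sum>k<n. norm (g (h (c' k)) - g (h (c k)))) < e"
proof -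
  have "nonoverlapping_intervals a b n (h \<circ> c) (h \<circ> c')"
    using family \<open>mono h\<close> into by (rule nonoverlapping_intervals_image)
  moreover have "(\<Sum>k<n. h (c' k) - h (c k)) \<le> (\<Sum>k<n. c' k - c k)"
    using family by (intro sum_mono contract) (simp add: nonoverlapping_intervals_def)
  ultimately show ?thesis
    using len small by (auto simp: o_def)
qed

lemma abs_cont_on_translate:
  assumes "abs_cont_on a b g" "a \<le> a' + h" "b' + h \<le> b"
    and "\<And>s. a' \<le> s \<Longrightarrow> s \<le> b' \<Longrightarrow> g' s = g (s + h)"
  shows "abs_cont_on a' b' g'"
  unfolding abs_cont_on_iff
proof (intro allI impI)
  fix e :: real assume "0 < e"
  with assms(1) obtain d where "d > 0"
    and d: "\<forall>n c c'. nonoverlapping_intervals a b n c c' \<and> (\<Sum>k<n. c' k - c k) < d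
              \<longrightarrow> (\<Sum>k<n. norm (g (c' k) - g (c k))) < e"
    unfolding abs_cont_on_iff by blast
  have "(\<Sum>k<n. norm (g' (c' k) - g' (c k))) < e"
    if family: "nonoverlapping_intervals a' b' n c c'" and len: "(\<Sum>k<n. c' k - c k) < d"
    for n c c'
  proof -
    have "(\<Sum>k<n. norm (g (c' k + h) - g (c k + h))) < e"
      by (rule variation_lt_mono_image[OF d family len]) (use assms(2,3) in \<open>auto simp: mono_def\<close>)
    moreover have "(\<Sum>k<n. norm (g' (c' k) - g' (c k))) = (\<Sum>k<n. norm (g (c' k + h) - g (c k + h)))"
      using family assms(4) by (intro sum.cong) (auto simp: nonoverlapping_intervals_def)
    ultimately show ?thesis
      by simp
  qed
  with \<open>d > 0\<close> show "\<exists>d>0. \<forall>n c c'. nonoverlapping_intervals a' b' n c c' \<and> (\<Sum>k<n. c' k - c k) < d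
      \<longrightarrow> (\<Sum>k<n. norm (g' (c' k) - g' (c k))) < e"
    by blast
qed

lemma norm_diff_le_clamped:
  fixes g :: "real \<Rightarrow> 'b::real_normed_vector"
  assumes "c \<le> c'"
  shows "norm (g c' - g c) \<le> norm (g (min c' m) - g (min c m)) + norm (g (max c' m) - g (max c m))"
proof (cases "c' \<le> m \<or> m \<le> c")
  case True
  with assms show ?thesis
    by (auto simp: min_def max_def)
next
  case False
  then have "min c m = c" "min c' m = m" "max c m = m" "max c' m = c'"
    by auto
  then show ?thesis
    using norm_triangle_ineq[of "g m - g c" "g c' - g m"] by (simp add: add.commute)
qed

lemma abs_cont_on_combine:
  assumes "abs_cont_on a m g" "abs_cont_on m b g" "a \<le> m" "m \<le> b"
  shows "abs_cont_on a b g"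
  unfolding abs_cont_on_iff
proof (intro allI impI)
  fix e :: real assume "0 < e"
  then have "0 < e / 2"
    by simp
  with assms(1) obtain d1 where "d1 > 0"
    and d1: "\<forall>n c c'. nonoverlapping_intervals a m n c c' \<and> (\<Sum>k<n. c' k - c k) < d1
               \<longrightarrow> (\<Sum>k<n. norm (g (c' k) - g (c k))) < e / 2"
    unfolding abs_cont_on_iff by blast
  from assms(2) \<open>0 < e / 2\<close> obtain d2 where "d2 > 0"
    and d2: "\<forall>n c c'. nonoverlapping_intervals m b n c c' \<and> (\<Sum>k<n. c' k - c k) < d2
               \<longrightarrow> (\<Sum>k<n. norm (g (c' k) - g (c k))) < e / 2"
    unfolding abs_cont_on_iff by blast
  have "(\<Sum>k<n. norm (g (c' k) - g (c k))) < e"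
    if family: "nonoverlapping_intervals a b n c c'" and len: "(\<Sum>k<n. c' k - c k) < min d1 d2"
    for n c c'
  proof -
    have lens: "(\<Sum>k<n. c' k - c k) < d1" "(\<Sum>k<n. c' k - c k) < d2"
      using len by simp_all
    have lo: "(\<Sum>k<n. norm (g (min (c' k) m) - g (min (c k) m))) < e / 2"
      by (rule variation_lt_mono_image[OF d1 family lens(1)]) (use assms(3) in \<open>auto simp: mono_def min_def\<close>)
    have hi: "(\<Sum>k<n. norm (g (max (c' k) m) - g (max (c k) m))) < e / 2"
      by (rule variation_lt_mono_image[OF d2 family lens(2)]) (use assms(4) in \<open>auto simp: mono_def max_def\<close>)
    have "(\<Sum>k<n. norm (g (c' k) - g (c k))) \<le>
        (\<Sum>k<n. norm (g (min (c' k) m) - g (min (c k) m)) + norm (g (max (c' k) m) - g (max (c k) m)))"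
      using family by (intro sum_mono norm_diff_le_clamped) (simp add: nonoverlapping_intervals_def)
    with lo hi show ?thesis
      by (simp add: sum.distrib)
  qed
  with \<open>d1 > 0\<close> \<open>d2 > 0\<close> show "\<exists>d>0. \<forall>n c c'. nonoverlapping_intervals a b n c c' \<and>
      (\<Sum>k<n. c' k - c k) < d \<longrightarrow> (\<Sum>k<n. norm (g (c' k) - g (c k))) < e"
    by (intro exI[of _ "min d1 d2"]) auto
qed

definition glue :: "real \<Rightarrow> (real \<Rightarrow> 'a) \<Rightarrow> (real \<Rightarrow> 'a) \<Rightarrow> real \<Rightarrow> 'a" where
  "glue d g1 g2 s = (if s \<le> d then g1 s else g2 (s - d))"

lemma glue_apply2:
  "h (glue d a1 a2 s) (glue d b1 b2 s) = glue d (\<lambda>s. h (a1 s) (b1 s)) (\<lambda>s. h (a2 s) (b2 s)) s"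
  by (simp add: glue_def)

lemma abs_cont_on_glue:
  assumes "abs_cont_on 0 d y1" "abs_cont_on 0 t y2" "y1 d = y2 0" "0 \<le> d" "0 \<le> t"
  shows "abs_cont_on 0 (d + t) (glue d y1 y2)"
proof (rule abs_cont_on_combine)
  show "abs_cont_on 0 d (glue d y1 y2)"
    by (rule abs_cont_on_translate[OF assms(1), where h = 0]) (auto simp: glue_def)
  show "abs_cont_on d (d + t) (glue d y1 y2)"
    by (rule abs_cont_on_translate[OF assms(2), where h = "-d"]) (use assms(3) in \<open>auto simp: glue_def\<close>)
qed (use assms in auto)

lemma AE_lebesgue_on_iff_negligible:
  assumes "S \<in> sets lebesgue"
  shows "(AE x in lebesgue_on S. P x) \<longleftrightarrow> (\<exists>N. negligible N \<and> (\<forall>x\<in>S. x \<notin> N \<longrightarrow> P x))"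
proof
  assume "AE x in lebesgue_on S. P x"
  then obtain N where N: "{x \<in> space (lebesgue_on S). \<not> P x} \<subseteq> N" "N \<in> null_sets (lebesgue_on S)"
    by (rule AE_E) blast
  then have "negligible N"
    using null_sets_restrict_space[OF assms] negligible_iff_null_sets by blast
  with N(1) show "\<exists>N. negligible N \<and> (\<forall>x\<in>S. x \<notin> N \<longrightarrow> P x)"
    by (auto simp: space_restrict_space)
next
  assume "\<exists>N. negligible N \<and> (\<forall>x\<in>S. x \<notin> N \<longrightarrow> P x)"
  then obtain N where N: "negligible N" "\<forall>x\<in>S. x \<notin> N \<longrightarrow> P x"
    by blast
  have "N \<inter> S \<in> null_sets (lebesgue_on S)"
    using N(1) negligible_subset[of N "N \<inter> S"] null_sets_restrict_space[OF assms]
    by (auto simp: negligible_iff_null_sets)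
  moreover have "{x \<in> space (lebesgue_on S). \<not> P x} \<subseteq> N \<inter> S"
    using N(2) by (auto simp: space_restrict_space)
  ultimately show "AE x in lebesgue_on S. P x"
    by (rule AE_I')
qed

lemma AE_lebesgue_on_interval_iff:
  "(AE x in lebesgue_on {a..b::real}. P x) \<longleftrightarrow> (\<exists>N. negligible N \<and> (\<forall>x\<in>{a..b}. x \<notin> N \<longrightarrow> P x))"
  by (rule AE_lebesgue_on_iff_negligible) simp

lemma AE_lebesgue_on_subset:
  assumes "AE s in lebesgue_on {a..b}. P s" "{c..d} \<subseteq> {a..b::real}"
  shows "AE s in lebesgue_on {c..d}. P s"
  using assms by (auto simp: AE_lebesgue_on_interval_iff)

lemma AE_lebesgue_on_translate:
  fixes a b h :: real
  assumes "AE s in lebesgue_on {a + h..b + h}. P s"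
  shows "AE s in lebesgue_on {a..b}. P (s + h)"
proof -
  obtain N where N: "negligible N" "\<And>s. s \<in> {a + h..b + h} \<Longrightarrow> s \<notin> N \<Longrightarrow> P s"
    using assms by (auto simp: AE_lebesgue_on_interval_iff)
  have "P (s + h)" if "s \<in> {a..b}" "s \<notin> (+) (-h) ` N" for s
  proof -
    have "s + h \<notin> N"
      using that(2) by (metis add_minus_cancel image_eqI add.commute)
    then show ?thesis
      using N(2) that(1) by auto
  qed
  then show ?thesis
    using negligible_translation[OF N(1), of "-h"] by (auto simp: AE_lebesgue_on_interval_iff)
qed

lemma borel_measurable_lebesgue_on_translate:
  fixes u :: "real \<Rightarrow> 'b::euclidean_space"
  assumes "u \<in> borel_measurable (lebesgue_on {a..b})"
  shows "(\<lambda>s. u (s + c)) \<in> borel_measurable (lebesgue_on {a - c..b - c})"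
proof -
  have "(\<lambda>s. if s \<in> {a..b} then u s else 0) \<in> borel_measurable lebesgue"
    using assms by (intro borel_measurable_if_I) auto
  moreover have "(\<lambda>x::real. c + 1 * x) \<in> lebesgue \<rightarrow>\<^sub>M lebesgue"
    using lebesgue_affine_measurable[where c = "\<lambda>x::real. 1" and t = c] by simp
  ultimately have "(\<lambda>s. if s \<in> {a..b} then u s else 0) \<circ> (\<lambda>x::real. c + 1 * x) \<in> borel_measurable lebesgue"
    by (rule measurable_comp[rotated])
  moreover have "(\<lambda>s. if s \<in> {a..b} then u s else 0) \<circ> (\<lambda>x::real. c + 1 * x)
      = (\<lambda>s. if s \<in> {a - c..b - c} then u (s + c) else 0)"
    by (auto simp: fun_eq_iff add.commute)
  ultimately show ?thesis
    by (intro borel_measurable_if_D) simp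
qed

lemma borel_measurable_glue:
  fixes u1 u2 :: "real \<Rightarrow> 'b::euclidean_space"
  assumes "u1 \<in> borel_measurable (lebesgue_on {0..d})" "u2 \<in> borel_measurable (lebesgue_on {0..t})"
    and "0 \<le> d" "0 \<le> t"
  shows "glue d u1 u2 \<in> borel_measurable (lebesgue_on {0..d + t})"
proof -
  have first: "(\<lambda>s. if s \<in> {0..d} then u1 s else 0) \<in> borel_measurable lebesgue"
    using assms by (intro borel_measurable_if_I) auto
  have "(\<lambda>s. u2 (s - d)) \<in> borel_measurable (lebesgue_on {d..d + t})"
    using borel_measurable_lebesgue_on_translate[OF assms(2), of "-d"] by (simp add: add.commute)
  then have "(\<lambda>s. u2 (s - d)) \<in> borel_measurable (lebesgue_on {d<..d + t})"
    by (rule measurable_restrict_mono) auto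
  then have second: "(\<lambda>s. if s \<in> {d<..d + t} then u2 (s - d) else 0) \<in> borel_measurable lebesgue"
    by (intro borel_measurable_if_I) auto
  have "(\<lambda>s. (if s \<in> {0..d} then u1 s else 0) + (if s \<in> {d<..d + t} then u2 (s - d) else 0))
        \<in> borel_measurable lebesgue"
    using first second by (rule borel_measurable_add)
  moreover have "(\<lambda>s. (if s \<in> {0..d} then u1 s else 0) + (if s \<in> {d<..d + t} then u2 (s - d) else 0))
      = (\<lambda>s. if s \<in> {0..d + t} then glue d u1 u2 s else 0)"
    using assms(3,4) by (auto simp: fun_eq_iff glue_def)
  ultimately show ?thesis
    by (intro borel_measurable_if_D) simp
qed

lemma has_bochner_integral_lebesgue_on_translate:
  fixes F :: "real \<Rightarrow> 'b::euclidean_space"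
  assumes "has_bochner_integral (lebesgue_on {a..b}) F I"
  shows "has_bochner_integral (lebesgue_on {a - c..b - c}) (\<lambda>x. F (x + c)) I"
proof -
  have eq: "indicat_real {a..b} (c + 1 * x) *\<^sub>R F (c + 1 * x) = indicat_real {a - c..b - c} x *\<^sub>R F (x + c)"
    for x
    by (auto simp: indicator_def add.commute)
  have "has_bochner_integral lebesgue (\<lambda>x. indicator {a..b} x *\<^sub>R F x) I"
    using assms by (auto simp: has_bochner_integral_restrict_space)
  then have "has_bochner_integral lebesgue (\<lambda>x. indicator {a - c..b - c} x *\<^sub>R F (x + c)) I"
    using has_bochner_integral_lebesgue_real_affine_iff[of 1 "\<lambda>x. indicator {a..b} x *\<^sub>R F x" I c]
    by (simp only: eq) simp
  then show ?thesis
    by (auto simp: has_bochner_integral_restrict_space)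
qed

lemma integral_lebesgue_on_translate:
  fixes F :: "real \<Rightarrow> 'b::euclidean_space"
  assumes "integrable (lebesgue_on {a..b}) F"
  shows "integrable (lebesgue_on {a - c..b - c}) (\<lambda>x. F (x + c))"
    and "integral\<^sup>L (lebesgue_on {a - c..b - c}) (\<lambda>x. F (x + c)) = integral\<^sup>L (lebesgue_on {a..b}) F"
  using has_bochner_integral_lebesgue_on_translate[of a b F "integral\<^sup>L (lebesgue_on {a..b}) F" c] assms
  by (auto simp: has_bochner_integral_iff)

lemma integral_lebesgue_on_spike:
  fixes F G :: "real \<Rightarrow> 'b::euclidean_space"
  assumes "integrable (lebesgue_on {a..b}) F" "\<And>s. s \<in> {a..b} \<Longrightarrow> s \<noteq> c \<Longrightarrow> G s = F s"
  shows "integrable (lebesgue_on {a..b}) G"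
    and "integral\<^sup>L (lebesgue_on {a..b}) G = integral\<^sup>L (lebesgue_on {a..b}) F"
proof -
  have "F absolutely_integrable_on {a..b}"
    using assms(1) by (simp add: integrable_restrict_space set_integrable_def)
  then have "G absolutely_integrable_on {a..b}"
    by (rule absolutely_integrable_spike[where S = "{c}"]) (use assms(2) in auto)
  then show G: "integrable (lebesgue_on {a..b}) G"
    by (simp add: integrable_restrict_space set_integrable_def)
  have "integral {a..b} G = integral {a..b} F"
    by (rule integral_spike[where S = "{c}"]) (use assms(2) in auto)
  then show "integral\<^sup>L (lebesgue_on {a..b}) G = integral\<^sup>L (lebesgue_on {a..b}) F"
    using assms(1) G by (simp add: lebesgue_integral_eq_integral)
qed

lemma integral_split_translate:
  fixes F :: "real \<Rightarrow> 'b::euclidean_space"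
  assumes "integrable (lebesgue_on {0..d + t}) F" "0 \<le> d" "0 \<le> t"
  shows "integral\<^sup>L (lebesgue_on {0..d + t}) F =
           integral\<^sup>L (lebesgue_on {0..d}) F + integral\<^sup>L (lebesgue_on {0..t}) (\<lambda>s. F (s + d))"
proof -
  have "integrable (lebesgue_on {d..d + t}) F"
    by (rule integrable_subinterval[OF assms(1)]) (use assms in auto)
  then have "integral\<^sup>L (lebesgue_on {0..t}) (\<lambda>s. F (s + d)) = integral\<^sup>L (lebesgue_on {d..d + t}) F"
    using integral_lebesgue_on_translate(2)[of d "d + t" F d] by simp
  with assms show ?thesis
    by (simp add: integral_combine)
qed

lemma integral_glue:
  fixes F1 F2 :: "real \<Rightarrow> 'b::euclidean_space"
  assumes F1: "integrable (lebesgue_on {0..d}) F1" and F2: "integrable (lebesgue_on {0..t}) F2"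
    and "0 \<le> d" "0 \<le> t"
  shows "integrable (lebesgue_on {0..d + t}) (glue d F1 F2)"
    and "integral\<^sup>L (lebesgue_on {0..d + t}) (glue d F1 F2) =
           integral\<^sup>L (lebesgue_on {0..d}) F1 + integral\<^sup>L (lebesgue_on {0..t}) F2"
proof -
  have "integrable (lebesgue_on {0..d}) (glue d F1 F2) \<longleftrightarrow> integrable (lebesgue_on {0..d}) F1"
    by (rule Bochner_Integration.integrable_cong) (auto simp: glue_def space_restrict_space)
  with F1 have first: "integrable (lebesgue_on {0..d}) (glue d F1 F2)"
    by simp
  have "integrable (lebesgue_on {d..d + t}) (\<lambda>s. F2 (s - d))"
    using integral_lebesgue_on_translate(1)[OF F2, of "-d"] by (simp add: add.commute)
  then have "integrable (lebesgue_on {d..d + t}) (glue d F1 F2)"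
    by (rule integral_lebesgue_on_spike(1)[where c = d]) (auto simp: glue_def)
  with first show glued: "integrable (lebesgue_on {0..d + t}) (glue d F1 F2)"
    by (rule integrable_combine) (use assms in auto)
  have "integral\<^sup>L (lebesgue_on {0..d}) (glue d F1 F2) = integral\<^sup>L (lebesgue_on {0..d}) F1"
    by (rule Bochner_Integration.integral_cong) (auto simp: glue_def space_restrict_space)
  moreover have "integral\<^sup>L (lebesgue_on {0..t}) (\<lambda>s. glue d F1 F2 (s + d)) = integral\<^sup>L (lebesgue_on {0..t}) F2"
    by (rule integral_lebesgue_on_spike(2)[OF F2, where c = 0]) (auto simp: glue_def)
  ultimately show "integral\<^sup>L (lebesgue_on {0..d + t}) (glue d F1 F2) =
      integral\<^sup>L (lebesgue_on {0..d}) F1 + integral\<^sup>L (lebesgue_on {0..t}) F2"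
    using integral_split_translate[OF glued assms(3,4)] by simp
qed

lemma has_vector_derivative_shift_within:
  assumes "(y has_vector_derivative D) (at (s + h) within S)" "(\<lambda>s. s + h) ` T \<subseteq> S"
  shows "((\<lambda>s. y (s + h)) has_vector_derivative D) (at s within T)"
proof -
  have "((\<lambda>s. s + h) has_vector_derivative 1) (at s within T)"
    by (auto intro!: derivative_eq_intros)
  moreover have "(y has_vector_derivative D) (at ((\<lambda>s. s + h) s) within (\<lambda>s. s + h) ` T)"
    using assms by (auto intro: has_vector_derivative_within_subset)
  ultimately have "((y \<circ> (\<lambda>s. s + h)) has_vector_derivative (1 *\<^sub>R D)) (at s within T)"
    by (rule vector_diff_chain_within)
  then show ?thesis
    by (simp add: o_def)
qed

lemma has_vector_derivative_glue_left:
  assumes "(y1 has_vector_derivative D) (at s within {0..d})" "0 \<le> s" "s < d" "0 \<le> t"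
  shows "(glue d y1 y2 has_vector_derivative D) (at s within {0..d + t})"
proof -
  have "(glue d y1 y2 has_vector_derivative D) (at s within {0..d})"
    by (rule has_vector_derivative_transform_within[OF assms(1), where d = 1])
      (use assms(2,3) in \<open>auto simp: glue_def\<close>)
  moreover have "at s within {0..d} = at s within {0..d + t}"
    by (rule at_within_nhd[where S = "{..<d}"]) (use assms(3,4) in auto)
  ultimately show ?thesis
    by simp
qed

lemma has_vector_derivative_glue_right:
  assumes "(y2 has_vector_derivative D) (at (s - d) within {0..t})" "0 \<le> d" "d < s" "s \<le> d + t"
  shows "(glue d y1 y2 has_vector_derivative D) (at s within {0..d + t})"
proof -
  from assms(1) have "((\<lambda>s. y2 (s + -d)) has_vector_derivative D) (at s within {d..d + t})"
    by (intro has_vector_derivative_shift_within[where S = "{0..t}"]) auto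
  then have "(glue d y1 y2 has_vector_derivative D) (at s within {d..d + t})"
    by (rule has_vector_derivative_transform_within[where d = "s - d"])
      (use assms(3,4) in \<open>auto simp: glue_def dist_real_def\<close>)
  moreover have "at s within {d..d + t} = at s within {0..d + t}"
    by (rule at_within_nhd[where S = "{d<..}"]) (use assms(2,3) in auto)
  ultimately show ?thesis
    by simp
qed

lemma AE_has_vector_derivative_glue:
  fixes y1 y2 :: "real \<Rightarrow> 'b::real_normed_vector"
  assumes "AE s in lebesgue_on {0..d}. (y1 has_vector_derivative D1 s) (at s within {0..d})"
    and "AE s in lebesgue_on {0..t}. (y2 has_vector_derivative D2 s) (at s within {0..t})"
    and "0 \<le> d" "0 \<le> t"
  shows "AE s in lebesgue_on {0..d + t}.
           (glue d y1 y2 has_vector_derivative glue d D1 D2 s) (at s within {0..d + t})"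
proof -
  obtain N1 where N1: "negligible N1"
    "\<And>s. s \<in> {0..d} \<Longrightarrow> s \<notin> N1 \<Longrightarrow> (y1 has_vector_derivative D1 s) (at s within {0..d})"
    using assms(1) by (auto simp: AE_lebesgue_on_interval_iff)
  obtain N2 where N2: "negligible N2"
    "\<And>s. s \<in> {0..t} \<Longrightarrow> s \<notin> N2 \<Longrightarrow> (y2 has_vector_derivative D2 s) (at s within {0..t})"
    using assms(2) by (auto simp: AE_lebesgue_on_interval_iff)
  have "(glue d y1 y2 has_vector_derivative glue d D1 D2 s) (at s within {0..d + t})"
    if s: "s \<in> {0..d + t}" "s \<notin> {d} \<union> N1 \<union> (+) d ` N2" for s
  proof (cases "s < d")
    case True
    with s N1(2) show ?thesis
      by (auto simp: glue_def intro!: has_vector_derivative_glue_left \<open>0 \<le> t\<close>)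
  next
    case False
    with s have "d < s" "s - d \<notin> N2"
      by (auto, metis add_diff_cancel_left' image_eqI diff_add_cancel add.commute)
    with s N2(2) show ?thesis
      by (auto simp: glue_def intro!: has_vector_derivative_glue_right \<open>0 \<le> d\<close>)
  qed
  moreover have "negligible ({d} \<union> N1 \<union> (+) d ` N2)"
    using N1(1) negligible_translation[OF N2(1)] by (auto intro: negligible_Un)
  ultimately show ?thesis
    unfolding AE_lebesgue_on_interval_iff by blast
qed

definition payoff :: "('x \<Rightarrow> 'u \<Rightarrow> real) \<Rightarrow> real \<Rightarrow> (real \<Rightarrow> 'u) \<Rightarrow> (real \<Rightarrow> 'x) \<Rightarrow> real" where
  "payoff L t u y = integral\<^sup>L (lebesgue_on {0..t}) (\<lambda>s. L (y s) (u s))"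

lemma payoff_zero: "payoff L 0 u y = 0"
proof -
  have "{0..0::real} \<in> null_sets lebesgue"
    using negligible_iff_null_sets[of "{0::real}"] by auto
  then show ?thesis
    unfolding payoff_def by (rule integral_eq_zero_null_sets)
qed

lemma admissible_restrict:
  assumes adm: "admissible X U f L t' x u y" and "t \<le> t'"
  shows "admissible X U f L t x u y"
  unfolding admissible_def
proof (intro conjI)
  from adm have meas: "u \<in> borel_measurable (lebesgue_on {0..t'})"
    and ac: "abs_cont_on 0 t' y"
    and ae: "AE s in lebesgue_on {0..t'}. (y has_vector_derivative f (y s) (u s)) (at s within {0..t'})"
    and int: "integrable (lebesgue_on {0..t'}) (\<lambda>s. L (y s) (u s))"
    unfolding admissible_def by auto
  show "u \<in> borel_measurable (lebesgue_on {0..t})"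
    by (rule measurable_restrict_mono[OF meas]) (use \<open>t \<le> t'\<close> in auto)
  show "\<forall>s\<in>{0..t}. u s \<in> U" "\<forall>s\<in>{0..t}. y s \<in> X" "y 0 = x"
    using adm \<open>t \<le> t'\<close> by (auto simp: admissible_def)
  show "abs_cont_on 0 t y"
    by (rule abs_cont_on_translate[OF ac, where h = 0]) (use \<open>t \<le> t'\<close> in auto)
  have "AE s in lebesgue_on {0..t}. (y has_vector_derivative f (y s) (u s)) (at s within {0..t'})"
    by (rule AE_lebesgue_on_subset[OF ae]) (use \<open>t \<le> t'\<close> in auto)
  then show "AE s in lebesgue_on {0..t}. (y has_vector_derivative f (y s) (u s)) (at s within {0..t})"
    by (rule lebesgue_on_mono) (use \<open>t \<le> t'\<close> in \<open>auto intro: has_vector_derivative_within_subset\<close>)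
  show "integrable (lebesgue_on {0..t}) (\<lambda>s. L (y s) (u s))"
    by (rule integrable_subinterval[OF int]) (use \<open>t \<le> t'\<close> in auto)
qed

lemma admissible_tail:
  assumes adm: "admissible X U f L (d + t) x u y" and "0 \<le> d"
  shows "admissible X U f L t (y d) (\<lambda>s. u (s + d)) (\<lambda>s. y (s + d))"
  unfolding admissible_def
proof (intro conjI)
  from adm have meas: "u \<in> borel_measurable (lebesgue_on {0..d + t})"
    and ac: "abs_cont_on 0 (d + t) y"
    and ae: "AE s in lebesgue_on {0..d + t}. (y has_vector_derivative f (y s) (u s)) (at s within {0..d + t})"
    and int: "integrable (lebesgue_on {0..d + t}) (\<lambda>s. L (y s) (u s))"
    unfolding admissible_def by auto
  have "u \<in> borel_measurable (lebesgue_on {d..d + t})"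
    by (rule measurable_restrict_mono[OF meas]) (use \<open>0 \<le> d\<close> in auto)
  from borel_measurable_lebesgue_on_translate[OF this, of d]
  show "(\<lambda>s. u (s + d)) \<in> borel_measurable (lebesgue_on {0..t})"
    by simp
  show "\<forall>s\<in>{0..t}. u (s + d) \<in> U" "\<forall>s\<in>{0..t}. y (s + d) \<in> X" "y (0 + d) = y d"
    using adm \<open>0 \<le> d\<close> by (auto simp: admissible_def)
  show "abs_cont_on 0 t (\<lambda>s. y (s + d))"
    by (rule abs_cont_on_translate[OF ac, where h = d]) (use \<open>0 \<le> d\<close> in auto)
  have "AE s in lebesgue_on {0 + d..t + d}.
      (y has_vector_derivative f (y s) (u s)) (at s within {0..d + t})"
    by (rule AE_lebesgue_on_subset[OF ae]) (use \<open>0 \<le> d\<close> in auto)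
  then have "AE s in lebesgue_on {0..t}.
      (y has_vector_derivative f (y (s + d)) (u (s + d))) (at (s + d) within {0..d + t})"
    by (rule AE_lebesgue_on_translate)
  then show "AE s in lebesgue_on {0..t}.
      ((\<lambda>s. y (s + d)) has_vector_derivative f (y (s + d)) (u (s + d))) (at s within {0..t})"
    by (rule lebesgue_on_mono) (use \<open>0 \<le> d\<close> in \<open>auto intro: has_vector_derivative_shift_within\<close>)
  have "integrable (lebesgue_on {d..d + t}) (\<lambda>s. L (y s) (u s))"
    by (rule integrable_subinterval[OF int]) (use \<open>0 \<le> d\<close> in auto)
  from integral_lebesgue_on_translate(1)[OF this, of d]
  show "integrable (lebesgue_on {0..t}) (\<lambda>s. L (y (s + d)) (u (s + d)))"
    by simp
qed

lemma payoff_split: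
  assumes "admissible X U f L (d + t) x u y" "0 \<le> d" "0 \<le> t"
  shows "payoff L (d + t) u y = payoff L d u y + payoff L t (\<lambda>s. u (s + d)) (\<lambda>s. y (s + d))"
  using assms integral_split_translate[of d t "\<lambda>s. L (y s) (u s)"]
  by (simp add: payoff_def admissible_def)

lemma admissible_glue:
  assumes adm1: "admissible X U f L d x u1 y1" and adm2: "admissible X U f L t (y1 d) u2 y2"
    and "0 \<le> d" "0 \<le> t"
  shows "admissible X U f L (d + t) x (glue d u1 u2) (glue d y1 y2)"
    and "payoff L (d + t) (glue d u1 u2) (glue d y1 y2) = payoff L d u1 y1 + payoff L t u2 y2"
    and "glue d y1 y2 (d + t) = y2 t"
proof -
  from adm1 have int1: "integrable (lebesgue_on {0..d}) (\<lambda>s. L (y1 s) (u1 s))"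
    by (simp add: admissible_def)
  from adm2 have int2: "integrable (lebesgue_on {0..t}) (\<lambda>s. L (y2 s) (u2 s))"
    and "y2 0 = y1 d"
    by (simp_all add: admissible_def)
  show "admissible X U f L (d + t) x (glue d u1 u2) (glue d y1 y2)"
    unfolding admissible_def
  proof (intro conjI)
    show "glue d u1 u2 \<in> borel_measurable (lebesgue_on {0..d + t})"
      using adm1 adm2 by (intro borel_measurable_glue \<open>0 \<le> d\<close> \<open>0 \<le> t\<close>) (auto simp: admissible_def)
    show "\<forall>s\<in>{0..d + t}. glue d u1 u2 s \<in> U" "\<forall>s\<in>{0..d + t}. glue d y1 y2 s \<in> X"
      "glue d y1 y2 0 = x"
      using adm1 adm2 \<open>0 \<le> d\<close> by (auto simp: admissible_def glue_def)
    show "abs_cont_on 0 (d + t) (glue d y1 y2)"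
      using adm1 adm2 \<open>y2 0 = y1 d\<close>
      by (intro abs_cont_on_glue \<open>0 \<le> d\<close> \<open>0 \<le> t\<close>) (auto simp: admissible_def)
    have "AE s in lebesgue_on {0..d + t}. (glue d y1 y2 has_vector_derivative
        glue d (\<lambda>s. f (y1 s) (u1 s)) (\<lambda>s. f (y2 s) (u2 s)) s) (at s within {0..d + t})"
      using adm1 adm2 by (intro AE_has_vector_derivative_glue \<open>0 \<le> d\<close> \<open>0 \<le> t\<close>) (auto simp: admissible_def)
    then show "AE s in lebesgue_on {0..d + t}. (glue d y1 y2 has_vector_derivative
        f (glue d y1 y2 s) (glue d u1 u2 s)) (at s within {0..d + t})"
      by (simp only: glue_apply2)
    show "integrable (lebesgue_on {0..d + t}) (\<lambda>s. L (glue d y1 y2 s) (glue d u1 u2 s))"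
      using integral_glue(1)[OF int1 int2 \<open>0 \<le> d\<close> \<open>0 \<le> t\<close>] by (simp only: glue_apply2)
  qed
  show "payoff L (d + t) (glue d u1 u2) (glue d y1 y2) = payoff L d u1 y1 + payoff L t u2 y2"
    using integral_glue(2)[OF int1 int2 \<open>0 \<le> d\<close> \<open>0 \<le> t\<close>] by (simp only: payoff_def glue_apply2)
  show "glue d y1 y2 (d + t) = y2 t"
    using \<open>y2 0 = y1 d\<close> \<open>0 \<le> t\<close> by (auto simp: glue_def)
qed

section \<open>The Lax-Oleinik semigroup\<close>

lemma Sgrp_upper:
  "admissible X U f L t x u y \<Longrightarrow> madd (ereal (payoff L t u y)) (g (y t)) \<le> Sgrp X U f L t g x"
  unfolding Sgrp_def payoff_def by (rule SUP_upper2[where i = "(u, y)"]) auto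

lemma Sgrp_least:
  "(\<And>u y. admissible X U f L t x u y \<Longrightarrow> madd (ereal (payoff L t u y)) (g (y t)) \<le> c)
    \<Longrightarrow> Sgrp X U f L t g x \<le> c"
  unfolding Sgrp_def payoff_def by (rule SUP_least) auto

lemma Sgrp_mono:
  assumes "0 \<le> t" "\<forall>y\<in>X. g y \<le> g' y"
  shows "Sgrp X U f L t g x \<le> Sgrp X U f L t g' x"
proof (rule Sgrp_least)
  fix u y assume adm: "admissible X U f L t x u y"
  then have "y t \<in> X"
    using assms(1) by (auto simp: admissible_def)
  then have "madd (ereal (payoff L t u y)) (g (y t)) \<le> madd (ereal (payoff L t u y)) (g' (y t))"
    using assms(2) by (intro madd_mono) auto
  also have "\<dots> \<le> Sgrp X U f L t g' x"
    using adm by (rule Sgrp_upper)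
  finally show "madd (ereal (payoff L t u y)) (g (y t)) \<le> Sgrp X U f L t g' x" .
qed

lemma Sgrp_add_real: "Sgrp X U f L t (\<lambda>y. g y + ereal c) x = Sgrp X U f L t g x + ereal c"
  unfolding Sgrp_def SUP_add_real[symmetric] by (rule SUP_cong) (auto simp: madd_add_real)

lemma Sgrp_nonexpansive:
  "0 \<le> t \<Longrightarrow> uniformly_close X e g g' \<Longrightarrow>
    uniformly_close Y e (Sgrp X U f L t g) (Sgrp X U f L t g')"
  by (rule nonexpansive_mono_shift[where Y = X]) (auto intro: Sgrp_mono simp: Sgrp_add_real)

lemma Sgrp_Wop:
  "Sgrp X U f L t (Wop p w l) x = (SUP i\<in>{..<p}. madd (Sgrp X U f L t (w i) x) (l i))"
proof -
  let ?A = "{(u, y). admissible X U f L t x u y}"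
  let ?P = "\<lambda>(u, y). ereal (payoff L t u y)"
  have "Sgrp X U f L t (Wop p w l) x =
      (SUP uy\<in>?A. SUP i\<in>{..<p}. madd (madd (?P uy) (w i (snd uy t))) (l i))"
    unfolding Sgrp_def Wop_def payoff_def by (rule SUP_cong) (auto simp: madd_SUP madd_assoc)
  also have "\<dots> = (SUP i\<in>{..<p}. SUP uy\<in>?A. madd (madd (?P uy) (w i (snd uy t))) (l i))"
    by (rule SUP_commute)
  also have "\<dots> = (SUP i\<in>{..<p}. madd (Sgrp X U f L t (w i) x) (l i))"
    unfolding Sgrp_def payoff_def madd_SUP_left by (rule SUP_cong) (auto intro!: SUP_cong)
  finally show ?thesis .
qed

lemma pairing_Sgrp_Wop:
  "pairing X (z j) (Sgrp X U f L t (Wop p w l)) =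
     mp_mult p (\<lambda>j i. pairing X (z j) (Sgrp X U f L t (w i))) l j"
proof -
  have "pairing X (z j) (Sgrp X U f L t (Wop p w l)) =
      (SUP x\<in>X. SUP i\<in>{..<p}. madd (madd (z j x) (Sgrp X U f L t (w i) x)) (l i))"
    unfolding pairing_def Sgrp_Wop by (rule SUP_cong) (auto simp: madd_SUP madd_assoc)
  also have "\<dots> = (SUP i\<in>{..<p}. SUP x\<in>X. madd (madd (z j x) (Sgrp X U f L t (w i) x)) (l i))"
    by (rule SUP_commute)
  also have "\<dots> = mp_mult p (\<lambda>j i. pairing X (z j) (Sgrp X U f L t (w i))) l j"
    unfolding mp_mult_def pairing_def madd_SUP_left by simp
  finally show ?thesis .
qed

lemma Sgrp_Sgrp_le:
  assumes "0 \<le> d" "0 \<le> t"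
  shows "Sgrp X U f L d (Sgrp X U f L t g) x \<le> Sgrp X U f L (d + t) g x"
proof (rule Sgrp_least)
  fix u1 y1 assume adm1: "admissible X U f L d x u1 y1"
  have "madd (ereal (payoff L d u1 y1)) (madd (ereal (payoff L t u2 y2)) (g (y2 t)))
      \<le> Sgrp X U f L (d + t) g x"
    if adm2: "admissible X U f L t (y1 d) u2 y2" for u2 y2
  proof -
    note glued = admissible_glue[OF adm1 adm2 assms]
    have "madd (ereal (payoff L d u1 y1)) (madd (ereal (payoff L t u2 y2)) (g (y2 t)))
        = madd (ereal (payoff L (d + t) (glue d u1 u2) (glue d y1 y2))) (g (glue d y1 y2 (d + t)))"
      by (simp add: madd_ereal_ereal glued(2,3))
    also have "\<dots> \<le> Sgrp X U f L (d + t) g x"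
      by (rule Sgrp_upper[OF glued(1)])
    finally show ?thesis .
  qed
  then show "madd (ereal (payoff L d u1 y1)) (Sgrp X U f L t g (y1 d)) \<le> Sgrp X U f L (d + t) g x"
    unfolding Sgrp_def[of X U f L t] madd_SUP by (auto intro!: SUP_least simp: payoff_def)
qed

lemma Sgrp_le_Sgrp_Sgrp:
  assumes "0 \<le> d" "0 \<le> t"
  shows "Sgrp X U f L (d + t) g x \<le> Sgrp X U f L d (Sgrp X U f L t g) x"
proof (rule Sgrp_least)
  fix u y assume adm: "admissible X U f L (d + t) x u y"
  have "madd (ereal (payoff L (d + t) u y)) (g (y (d + t)))
      = madd (ereal (payoff L d u y))
          (madd (ereal (payoff L t (\<lambda>s. u (s + d)) (\<lambda>s. y (s + d)))) (g (y (t + d))))"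
    using payoff_split[OF adm assms] by (simp add: madd_ereal_ereal add.commute)
  also have "\<dots> \<le> madd (ereal (payoff L d u y)) (Sgrp X U f L t g (y d))"
    using Sgrp_upper[OF admissible_tail[OF adm \<open>0 \<le> d\<close>], of g] by (intro madd_mono) simp
  also have "\<dots> \<le> Sgrp X U f L d (Sgrp X U f L t g) x"
    by (rule Sgrp_upper[OF admissible_restrict[OF adm]]) (use \<open>0 \<le> t\<close> in simp)
  finally show "madd (ereal (payoff L (d + t) u y)) (g (y (d + t)))
      \<le> Sgrp X U f L d (Sgrp X U f L t g) x" .
qed

lemma Sgrp_add:
  "0 \<le> d \<Longrightarrow> 0 \<le> t \<Longrightarrow> Sgrp X U f L d (Sgrp X U f L t g) x = Sgrp X U f L (d + t) g x"
  by (rule order.antisym[OF Sgrp_Sgrp_le Sgrp_le_Sgrp_Sgrp])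

lemma Sgrp_no_controls: "U = {} \<Longrightarrow> 0 \<le> t \<Longrightarrow> Sgrp X U f L t g x = -\<infinity>"
  using Sgrp_least[of X U f L t x g "-\<infinity>"] by (auto simp: admissible_def)

lemma Sgrp_zero_time:
  assumes "U \<noteq> {}" "x \<in> X"
  shows "Sgrp X U f L 0 g x = g x"
proof (rule order.antisym)
  show "Sgrp X U f L 0 g x \<le> g x"
    by (rule Sgrp_least) (auto simp: admissible_def payoff_zero madd_zero_left)
  obtain u0 where "u0 \<in> U"
    using assms(1) by blast
  have "admissible X U f L 0 x (\<lambda>s. u0) (\<lambda>s. x)"
    unfolding admissible_def
  proof (intro conjI)
    show "AE s in lebesgue_on {0..0}. ((\<lambda>s. x) has_vector_derivative f x u0) (at s within {0..0})"
      by (subst AE_lebesgue_on_interval_iff) (auto intro!: exI[of _ "{0}"])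
    show "integrable (lebesgue_on {0..0::real}) (\<lambda>s. L x u0)"
      by (rule Lebesgue_Measure.integrable_const_ivl)
  qed (use \<open>u0 \<in> U\<close> assms(2) abs_cont_on_const in auto)
  from Sgrp_upper[OF this, of g] show "g x \<le> Sgrp X U f L 0 g x"
    by (simp add: payoff_zero madd_zero_left)
qed

section \<open>Error propagation\<close>

lemma perturbed_iteration_error:
  fixes S P :: "('a \<Rightarrow> ereal) \<Rightarrow> 'a \<Rightarrow> ereal" and v g :: "nat \<Rightarrow> 'a \<Rightarrow> ereal"
  assumes S: "\<And>e h h'. uniformly_close X e h h' \<Longrightarrow> uniformly_close X e (S h) (S h')"
    and P: "\<And>e h h'. uniformly_close X e h h' \<Longrightarrow> uniformly_close X e (P h) (P h')"
    and v_step: "\<And>k. k < N \<Longrightarrow> S (v k) = v (Suc k)"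
    and g_step: "\<And>k. k < N \<Longrightarrow> uniformly_close X m (g (Suc k)) (P (S (g k)))"
    and proj: "\<And>k. 0 < k \<Longrightarrow> k \<le> N \<Longrightarrow> uniformly_close X r (P (v k)) (v k)"
    and init: "uniformly_close X r (S (g 0)) (S (v 0))"
    and "0 < N"
  shows "uniformly_close X (real N * m + real (N + 1) * r) (g N) (v N)"
proof -
  have step: "uniformly_close X (m + e + r) (g (Suc k)) (v (Suc k))"
    if "k < N" "uniformly_close X e (S (g k)) (S (v k))" for k e
  proof -
    have "uniformly_close X e (P (S (g k))) (P (v (Suc k)))"
      using P[OF that(2)] v_step[OF that(1)] by simp
    with g_step[OF that(1)] have "uniformly_close X (m + e) (g (Suc k)) (P (v (Suc k)))"
      by (rule uniformly_close_trans)
    then show ?thesis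
      by (rule uniformly_close_trans) (use proj that(1) in simp)
  qed
  have invariant: "uniformly_close X (real k * m + real (k + 1) * r) (S (g k)) (S (v k))"
    if "k < N" for k
    using that
  proof (induction k)
    case 0
    then show ?case
      using init by simp
  next
    case (Suc k)
    then have "uniformly_close X (m + (real k * m + real (k + 1) * r) + r) (g (Suc k)) (v (Suc k))"
      by (intro step) simp_all
    then have "uniformly_close X (m + (real k * m + real (k + 1) * r) + r) (S (g (Suc k))) (S (v (Suc k)))"
      by (rule S)
    then show ?case
      by (simp add: algebra_simps)
  qed
  from \<open>0 < N\<close> obtain k where "N = Suc k"
    using gr0_implies_Suc by blast
  with step[OF _ invariant, of k] show ?thesis
    by (simp add: algebra_simps)
qed

lemma projections_uniformly_close:
  assumes "supdist X (PZ X q z g) g + supdist X (PW X p w g) g \<le> ereal r"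
  shows "uniformly_close X r (PW X p w (PZ X q z g)) g" and "uniformly_close X r (PW X p w g) g"
proof -
  have "0 \<le> supdist X (PZ X q z g) g" "0 \<le> supdist X (PW X p w g) g"
    by (rule supdist_nonneg)+
  with assms obtain a b where "supdist X (PZ X q z g) g = ereal a" "supdist X (PW X p w g) g = ereal b"
    and "a + b \<le> r" "0 \<le> a" "0 \<le> b"
    by (cases "supdist X (PZ X q z g) g"; cases "supdist X (PW X p w g) g") auto
  then have PZ: "uniformly_close X a (PZ X q z g) g" and PW: "uniformly_close X b (PW X p w g) g"
    by (simp_all flip: supdist_le_ereal_iff)
  have "uniformly_close X (a + b) (PW X p w (PZ X q z g)) g"
    by (rule uniformly_close_trans[OF PW_nonexpansive[OF PZ] PW])
  then show "uniformly_close X r (PW X p w (PZ X q z g)) g"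
    using \<open>a + b \<le> r\<close> by (rule uniformly_close_mono)
  show "uniformly_close X r (PW X p w g) g"
    using PW by (rule uniformly_close_mono) (use \<open>a + b \<le> r\<close> \<open>0 \<le> a\<close> in simp)
qed

lemma fem_step_uniformly_close:
  assumes "matdist q p Kt (\<lambda>j i. pairing X (z j) (Sgrp X U f L t (w i))) \<le> ereal m" "0 \<le> m"
  shows "uniformly_close X m (Wop p w (mp_resid q (\<lambda>j i. pairing X (z j) (w i)) (mp_mult p Kt l)))
           (PW X p w (PZ X q z (Sgrp X U f L t (Wop p w l))))"
proof -
  have "PW X p w (PZ X q z (Sgrp X U f L t (Wop p w l))) =
      Wop p w (mp_resid q (\<lambda>j i. pairing X (z j) (w i))
        (mp_mult p (\<lambda>j i. pairing X (z j) (Sgrp X U f L t (w i))) l))"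
    unfolding PW_def Wres_PZ pairing_Sgrp_Wop ..
  with assms show ?thesis
    by (auto intro!: Wop_nonexpansive mp_resid_nonexpansive mp_mult_uniformly_close
        simp: matdist_le_ereal_iff)
qed

lemma fem_initial_error:
  assumes "0 \<le> \<delta>" "uniformly_close X r (PW X p w (Sgrp X U f L 0 \<phi>)) (Sgrp X U f L 0 \<phi>)"
  shows "uniformly_close X r (Sgrp X U f L \<delta> (Wop p w (Wres X w \<phi>))) (Sgrp X U f L \<delta> (Sgrp X U f L 0 \<phi>))"
proof (cases "U = {}")
  case True
  with \<open>0 \<le> \<delta>\<close> show ?thesis
    by (simp add: uniformly_close_def Sgrp_no_controls)
next
  case False
  then have "Wres X w \<phi> = Wres X w (Sgrp X U f L 0 \<phi>)"
    unfolding Wres_def by (auto intro!: INF_cong simp: Sgrp_zero_time)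
  with assms show ?thesis
    by (simp add: PW_def Sgrp_nonexpansive)
qed

lemma fem_error_bound:
  assumes "0 < \<delta>" "0 < N"
    and proj: "\<And>k. k \<le> N \<Longrightarrow>
      supdist X (PZ X q z (Sgrp X U f L (real k * \<delta>) \<phi>)) (Sgrp X U f L (real k * \<delta>) \<phi>)
      + supdist X (PW X p w (Sgrp X U f L (real k * \<delta>) \<phi>)) (Sgrp X U f L (real k * \<delta>) \<phi>) \<le> ereal r"
    and Kt: "matdist q p Kt (\<lambda>j i. pairing X (z j) (Sgrp X U f L \<delta> (w i))) \<le> ereal m"
  shows "supdist X (Wop p w (fem_coeffs X p q w z Kt \<phi> N)) (Sgrp X U f L (real N * \<delta>) \<phi>)
           \<le> ereal (real N * m + real (N + 1) * r)"
proof -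
  let ?v = "\<lambda>k. Sgrp X U f L (real k * \<delta>) \<phi>" and ?g = "\<lambda>k. Wop p w (fem_coeffs X p q w z Kt \<phi> k)"
  let ?S = "Sgrp X U f L \<delta>" and ?P = "\<lambda>h. PW X p w (PZ X q z h)"
  have "0 \<le> m"
    using order.trans[OF matdist_nonneg Kt] by simp
  have "0 \<le> r"
    using order.trans[OF add_nonneg_nonneg[OF supdist_nonneg supdist_nonneg] proj[of 0]] by simp
  note projs = projections_uniformly_close[OF proj]
  have "uniformly_close X (real N * m + real (N + 1) * r) (?g N) (?v N)"
  proof (rule perturbed_iteration_error[where S = ?S and P = ?P])
    show "uniformly_close X e (?S h) (?S h')" if "uniformly_close X e h h'" for e h h'
      using that \<open>0 < \<delta>\<close> by (simp add: Sgrp_nonexpansive)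
    show "uniformly_close X e (?P h) (?P h')" if "uniformly_close X e h h'" for e h h'
      using that by (intro PW_nonexpansive PZ_nonexpansive)
    show "?S (?v k) = ?v (Suc k)" for k
      using \<open>0 < \<delta>\<close> by (auto simp: Sgrp_add algebra_simps)
    show "uniformly_close X m (?g (Suc k)) (?P (?S (?g k)))" for k
      using fem_step_uniformly_close[OF Kt \<open>0 \<le> m\<close>] by simp
    show "uniformly_close X r (?S (?g 0)) (?S (?v 0))"
      using projs(2)[of 0] \<open>0 < \<delta>\<close> by (simp add: fem_initial_error)
  qed (use \<open>0 < N\<close> projs(1) in auto)
  with \<open>0 \<le> m\<close> \<open>0 \<le> r\<close> show ?thesis
    by (simp add: supdist_le_ereal_iff)
qed

theorem lemma5p4:
  fixes X :: "(real ^ 'n) set" and U :: "(real ^ 'm) set"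
    and L :: "real ^ 'n \<Rightarrow> real ^ 'm \<Rightarrow> real"
    and f :: "real ^ 'n \<Rightarrow> real ^ 'm \<Rightarrow> real ^ 'n"
    and T :: real and N :: nat and \<phi> :: "real ^ 'n \<Rightarrow> ereal"
    and p q :: nat and w z :: "nat \<Rightarrow> real ^ 'n \<Rightarrow> ereal"
    and Kt :: "nat \<Rightarrow> nat \<Rightarrow> ereal"
  assumes "T > 0" and "N \<ge> 1" and "p \<ge> 1" and "q \<ge> 1"
    and "\<forall>x\<in>X. \<phi> x \<noteq> \<infinity>"
    and "\<forall>i<p. \<forall>x\<in>X. w i x \<noteq> \<infinity>"
    and "\<forall>j<q. \<forall>x\<in>X. z j x \<noteq> \<infinity>"
  defines "\<delta> \<equiv> T / real N"
  defines "v \<equiv> (\<lambda>t. Sgrp X U f L t \<phi>)"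
  defines "K \<equiv> (\<lambda>j i. pairing X (z j) (Sgrp X U f L \<delta> (w i)))"
  defines "vhT \<equiv> Wop p w (fem_coeffs X p q w z Kt \<phi> N)"
  shows "supdist X vhT (v T) \<le>
           ereal (1 + T / \<delta>) *
           ((SUP k\<in>{0..N}. supdist X (PZ X q z (v (real k * \<delta>))) (v (real k * \<delta>))
                          + supdist X (PW X p w (v (real k * \<delta>))) (v (real k * \<delta>)))
            + matdist q p Kt K)"
proof -
  define proj where "proj = (SUP k\<in>{0..N}. supdist X (PZ X q z (v (real k * \<delta>))) (v (real k * \<delta>))
                          + supdist X (PW X p w (v (real k * \<delta>))) (v (real k * \<delta>)))"
  have "0 < N" "0 < \<delta>" "T = real N * \<delta>" "T / \<delta> = real N"
    using \<open>T > 0\<close> \<open>N \<ge> 1\<close> by (auto simp: \<delta>_def)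
  have proj_upper: "supdist X (PZ X q z (v (real k * \<delta>))) (v (real k * \<delta>))
      + supdist X (PW X p w (v (real k * \<delta>))) (v (real k * \<delta>)) \<le> proj" if "k \<le> N" for k
    unfolding proj_def using that by (intro SUP_upper) auto
  have "0 \<le> proj"
    using proj_upper[of 0] by (meson add_nonneg_nonneg order.trans supdist_nonneg le0)
  with matdist_nonneg[of q p Kt K] consider "proj + matdist q p Kt K = \<infinity>"
    | r m where "proj = ereal r" "matdist q p Kt K = ereal m" "0 \<le> m"
    by (cases proj; cases "matdist q p Kt K") auto
  then show ?thesis
  proof cases
    case 1
    have infinite: "ereal (1 + T / \<delta>) * (proj + matdist q p Kt K) = \<infinity>"
      unfolding 1 \<open>T / \<delta> = real N\<close> by simp
    show ?thesis
      unfolding proj_def[symmetric] infinite by simp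
  next
    case 2
    have "supdist X vhT (v T) \<le> ereal (real N * m + real (N + 1) * r)"
      unfolding vhT_def v_def \<open>T = real N * \<delta>\<close>
      by (rule fem_error_bound[OF \<open>0 < \<delta>\<close> \<open>0 < N\<close>]) (use proj_upper 2 in \<open>auto simp: v_def K_def\<close>)
    also have "\<dots> \<le> ereal (1 + T / \<delta>) * (proj + matdist q p Kt K)"
      using 2 \<open>T / \<delta> = real N\<close> by (simp add: algebra_simps)
    finally show ?thesis
      unfolding proj_def .
  qed
qed

end
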